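(* Let $\nabla$ be a Type $\mathcal A$ connection on $\mathbb R^2$ whose Ricci tensor is non-degenerate, and let $U\subset\mathbb R^2$ be a connected open set. Then the affine Killing vector fields of $\nabla$ on $U$ are exactly the vector fields $b^1\partial_{x^1}+b^2\partial_{x^2}$ with $b^1,b^2\in\mathbb R$ constant.
   Context: A torsion-free connection has Christoffel symbols $\nabla_{\partial_{x^i}}\partial_{x^j}=\Gamma_{ij}^k\partial_{x^k}$; curvature $R(X,Y)Z=\nabla_X\nabla_YZ-\nabla_Y\nabla_XZ-\nabla_{[X,Y]}Z$, Ricci tensor $\rho(Y,Z)=\mathrm{Tr}(X\mapsto R(X,Y)Z)$. For real constants, $\Gamma(a,b,c,d,e,f)$ denotes the connection on $\mathbb R^2$ with constant Christoffel symbols $\Gamma_{11}^1=a$, $\Gamma_{11}^2=b$, $\Gamma_{12}^1=\Gamma_{21}^1=c$, $\Gamma_{12}^2=\Gamma_{21}^2=d$, $\Gamma_{22}^1=e$, $\Gamma_{22}^2=f$; these are the Type $\mathcal A$ connections. A vector field $X$ on $U$ is an affine Killing vector field if $\mathcal L_X\nabla=0$, i.e. $[X,\nabla_YZ]-\nabla_Y[X,Z]-\nabla_{[X,Y]}Z=0$ for all vector fields $Y,Z$ on $U$. *)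

theory Defs
  imports "HOL-Analysis.Analysis"
begin

text \<open>Points of the plane and tangent vectors are elements of real^2; the coordinates
  x^1, x^2 are the components indexed by 1, 2 :: 2.  A vector field is a function
  real^2 => real^2 (only its values on the relevant open set matter).\<close>

type_synonym vf = "real^2 \<Rightarrow> real^2"

fun Ck_on :: "nat \<Rightarrow> (real^2) set \<Rightarrow> (real^2 \<Rightarrow> 'b::real_normed_vector) \<Rightarrow> bool" where
  "Ck_on 0 U F = continuous_on U F"
| "Ck_on (Suc k) U F =
     (F differentiable_on U \<and> (\<forall>v. Ck_on k U (\<lambda>p. frechet_derivative F (at p) v)))"

definition smooth_on :: "(real^2) set \<Rightarrow> (real^2 \<Rightarrow> 'b::real_normed_vector) \<Rightarrow> bool" where
  "smooth_on U F \<longleftrightarrow> (\<forall>k. Ck_on k U F)"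

text \<open>Type A connection Gamma(a,b,c,d,e,f): Christoffel symbols Gam i j k = Gamma_ij^k.\<close>
definition typeA :: "real \<Rightarrow> real \<Rightarrow> real \<Rightarrow> real \<Rightarrow> real \<Rightarrow> real \<Rightarrow> 2 \<Rightarrow> 2 \<Rightarrow> 2 \<Rightarrow> real" where
  "typeA a b c d e f i j k =
     (if i = 1 \<and> j = 1 then (if k = 1 then a else b)
      else if i = 2 \<and> j = 2 then (if k = 1 then e else f)
      else (if k = 1 then c else d))"

definition dirderiv :: "vf \<Rightarrow> vf \<Rightarrow> vf" where
  "dirderiv Y Z = (\<lambda>p. frechet_derivative Z (at p) (Y p))"

definition nabla :: "(2 \<Rightarrow> 2 \<Rightarrow> 2 \<Rightarrow> real) \<Rightarrow> vf \<Rightarrow> vf \<Rightarrow> vf" where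
  "nabla Gam Y Z = (\<lambda>p. dirderiv Y Z p +
      (\<chi> k. \<Sum>i\<in>UNIV. \<Sum>j\<in>UNIV. Y p $ i * Z p $ j * Gam i j k))"

definition lie :: "vf \<Rightarrow> vf \<Rightarrow> vf" where
  "lie X Y = (\<lambda>p. dirderiv X Y p - dirderiv Y X p)"

definition coord :: "2 \<Rightarrow> vf" where
  "coord i = (\<lambda>p. axis i 1)"

definition curv :: "(2 \<Rightarrow> 2 \<Rightarrow> 2 \<Rightarrow> real) \<Rightarrow> vf \<Rightarrow> vf \<Rightarrow> vf \<Rightarrow> vf" where
  "curv Gam X Y Z = (\<lambda>p. nabla Gam X (nabla Gam Y Z) p - nabla Gam Y (nabla Gam X Z) p
                          - nabla Gam (lie X Y) Z p)"

definition ricci :: "(2 \<Rightarrow> 2 \<Rightarrow> 2 \<Rightarrow> real) \<Rightarrow> real^2 \<Rightarrow> 2 \<Rightarrow> 2 \<Rightarrow> real" where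
  "ricci Gam p j k = (\<Sum>i\<in>UNIV. curv Gam (coord i) (coord j) (coord k) p $ i)"

definition ricci_nondegenerate :: "(2 \<Rightarrow> 2 \<Rightarrow> 2 \<Rightarrow> real) \<Rightarrow> bool" where
  "ricci_nondegenerate Gam \<longleftrightarrow> (\<forall>p. det (\<chi> j k. ricci Gam p j k) \<noteq> 0)"

text \<open>Affine Killing vector field on U: smooth X with L_X nabla = 0, i.e.
  [X, nabla_Y Z] - nabla_Y [X,Z] - nabla_[X,Y] Z = 0 on U for all smooth Y, Z on U.\<close>
definition affine_killing :: "(2 \<Rightarrow> 2 \<Rightarrow> 2 \<Rightarrow> real) \<Rightarrow> (real^2) set \<Rightarrow> vf \<Rightarrow> bool" where
  "affine_killing Gam U X \<longleftrightarrow> smooth_on U X \<and>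
     (\<forall>Y Z. smooth_on U Y \<longrightarrow> smooth_on U Z \<longrightarrow>
        (\<forall>p\<in>U. lie X (nabla Gam Y Z) p - nabla Gam Y (lie X Z) p
                 - nabla Gam (lie X Y) Z p = 0))"

end

theory Submission
  imports Defs
begin

text \<open>For a connection with constant Christoffel symbols the equation
  \<open>(L\<^sub>X \<nabla>)(\<partial>\<^sub>i, \<partial>\<^sub>j) = 0\<close> reads
  \<open>\<partial>\<^sub>i \<partial>\<^sub>j X = X\<^sub>*\<Gamma>\<^sub>i\<^sub>j - \<Gamma>(\<partial>\<^sub>i, \<partial>\<^sub>j X) - \<Gamma>(\<partial>\<^sub>i X, \<partial>\<^sub>j)\<close>,
  so the Jacobian \<open>\<mu>\<close> of \<open>X\<close> solves a linear system \<open>\<partial>\<^sub>i \<mu> = N\<^sub>i \<mu>\<close> with constant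
  coefficients. Symmetry of second derivatives gives the integrability conditions
  \<open>N\<^sub>i N\<^sub>l \<mu> = N\<^sub>l N\<^sub>i \<mu>\<close>, and differentiating them once more gives the same conditions
  for every \<open>N\<^sub>r \<mu>\<close>. For Type A connections the first set forces \<open>\<rho> \<mu>\<^sup>T\<close> to be
  skew-symmetric, so \<open>\<mu>\<close> is a multiple of a fixed matrix built from the Ricci tensor \<open>\<rho>\<close>;
  the second set then forces \<open>det \<rho> = 0\<close> unless \<open>\<mu> = 0\<close>. Hence a non-degenerate Ricci
  tensor makes \<open>X\<close> locally constant, so constant on the connected set \<open>U\<close>. Conversely, for
  constant \<open>X\<close> the Killing equation reduces to the symmetry of the second derivatives of \<open>Z\<close>.\<close>

section \<open>Calculus\<close>

lemma frechet_derivative_cong_open: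
  assumes "open U" "p \<in> U" "\<And>q. q \<in> U \<Longrightarrow> f q = g q"
  shows "frechet_derivative f (at p) = frechet_derivative g (at p)"
proof -
  have "(f has_derivative f') (at p) \<longleftrightarrow> (g has_derivative f') (at p)" for f'
    using has_derivative_transform_within_open[of _ f' p UNIV U] assms by metis
  then show ?thesis unfolding frechet_derivative_def by simp
qed

lemma linear_eq_sum_axis:
  fixes f :: "real^'n \<Rightarrow> 'b::real_vector"
  assumes "linear f"
  shows "f v = (\<Sum>i\<in>UNIV. v$i *\<^sub>R f (axis i 1))"
proof -
  have "f v = f (\<Sum>i\<in>UNIV. v$i *\<^sub>R axis i 1)"
    using basis_expansion[of v] by (simp add: scalar_mult_eq_scaleR)
  then show ?thesis using assms by (simp add: linear_sum linear_scale)
qed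

lemma sum_axis_scaleR: "(\<Sum>l\<in>UNIV. axis r 1 $ l *\<^sub>R N l) = (N r :: 'b::real_vector)"
  for r :: "'n::finite"
proof -
  have "axis r 1 $ l *\<^sub>R N l = (if l = r then N l else 0)" for l
    by (simp add: axis_def)
  then show ?thesis by simp
qed

lemma has_derivative_vec_lambda:
  fixes f :: "'a::euclidean_space \<Rightarrow> 'i::finite \<Rightarrow> 'b::real_normed_vector"
  assumes "\<And>i. ((\<lambda>x. f x i) has_derivative f' i) F"
  shows "((\<lambda>x. \<chi> i. f x i) has_derivative (\<lambda>v. \<chi> i. f' i v)) F"
proof -
  have lin: "linear (f' i)" for i
    using assms has_derivative_linear by blast
  have "bounded_linear (\<lambda>v. \<chi> i. f' i v)"
    by (rule linear_conv_bounded_linear[THEN iffD1], rule linearI)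
      (simp_all add: vec_eq_iff linear_add[OF lin] linear_scale[OF lin])
  moreover
  let ?x = "Lim F (\<lambda>x. x)"
  have "((\<lambda>y. \<chi> i. (f y i - f ?x i - f' i (y - ?x)) /\<^sub>R norm (y - ?x)) \<longlongrightarrow> (\<chi> i. 0)) F"
    using assms by (intro tendsto_vec_lambda) (simp add: has_derivative_def)
  moreover have "(\<lambda>y. ((\<chi> i. f y i) - (\<chi> i. f ?x i) - (\<chi> i. f' i (y - ?x))) /\<^sub>R norm (y - ?x))
      = (\<lambda>y. \<chi> i. (f y i - f ?x i - f' i (y - ?x)) /\<^sub>R norm (y - ?x))"
    by (simp add: fun_eq_iff vec_eq_iff)
  ultimately show ?thesis unfolding has_derivative_def zero_vec_def by simp
qed

definition second_difference :: "('a::real_vector \<Rightarrow> 'b::real_vector) \<Rightarrow> 'a \<Rightarrow> 'a \<Rightarrow> 'a \<Rightarrow> real \<Rightarrow> 'b"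
  where "second_difference g p u w h = g (p + h *\<^sub>R u + h *\<^sub>R w) - g (p + h *\<^sub>R u) - g (p + h *\<^sub>R w) + g p"

lemma second_difference_commute: "second_difference g p u w h = second_difference g p w u h"
  by (simp add: second_difference_def add.commute add.left_commute)

lemma second_difference_mvt:
  fixes g :: "'a::real_normed_vector \<Rightarrow> real"
  assumes h: "0 < h"
    and box: "\<And>s t. s \<in> {0..h} \<Longrightarrow> t \<in> {0..h} \<Longrightarrow> p + s *\<^sub>R u + t *\<^sub>R w \<in> U"
    and dg: "\<And>q. q \<in> U \<Longrightarrow> (g has_derivative g' q) (at q)"
    and du: "\<And>q. q \<in> U \<Longrightarrow> ((\<lambda>q. g' q u) has_derivative hu q) (at q)"
  shows "\<exists>s\<in>{0<..<h}. \<exists>t\<in>{0<..<h}.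
           second_difference g p u w h = h * h * hu (p + s *\<^sub>R u + t *\<^sub>R w) w"
proof -
  define \<phi> where "\<phi> s = g (p + s *\<^sub>R u + h *\<^sub>R w) - g (p + s *\<^sub>R u)" for s
  have d\<phi>: "(\<phi> has_derivative (\<lambda>x. x * (g' (p + s *\<^sub>R u + h *\<^sub>R w) u - g' (p + s *\<^sub>R u + 0 *\<^sub>R w) u)))
      (at s within {0..h})" if "s \<in> {0..h}" for s
  proof -
    have "((\<lambda>s. g (p + s *\<^sub>R u + t *\<^sub>R w)) has_derivative (\<lambda>x. x * g' (p + s *\<^sub>R u + t *\<^sub>R w) u))
        (at s within {0..h})" if "t \<in> {0..h}" for t
    proof -
      have q: "p + s *\<^sub>R u + t *\<^sub>R w \<in> U"
        using box \<open>s \<in> {0..h}\<close> that by blast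
      have "((\<lambda>s. p + s *\<^sub>R u + t *\<^sub>R w) has_derivative (\<lambda>x. x *\<^sub>R u)) (at s within {0..h})"
        by (auto intro!: derivative_eq_intros)
      from has_derivative_compose[OF this dg[OF q]] show ?thesis
        using has_derivative_linear[OF dg[OF q]] by (simp add: linear_scale)
    qed
    from this[of h] this[of 0] show ?thesis
      unfolding \<phi>_def using h by (auto dest: has_derivative_diff simp: right_diff_distrib)
  qed
  obtain s where s: "s \<in> {0<..<h}"
    and \<phi>_eq: "\<phi> h - \<phi> 0 = h * (g' (p + s *\<^sub>R u + h *\<^sub>R w) u - g' (p + s *\<^sub>R u + 0 *\<^sub>R w) u)"
    using mvt_simple[OF h, of \<phi>, OF d\<phi>] by auto
  define \<psi> where "\<psi> t = g' (p + s *\<^sub>R u + t *\<^sub>R w) u" for t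
  have d\<psi>: "(\<psi> has_derivative (\<lambda>x. x * hu (p + s *\<^sub>R u + t *\<^sub>R w) w)) (at t within {0..h})"
    if "t \<in> {0..h}" for t
  proof -
    have q: "p + s *\<^sub>R u + t *\<^sub>R w \<in> U"
      using box s that by auto
    have "((\<lambda>t. p + s *\<^sub>R u + t *\<^sub>R w) has_derivative (\<lambda>x. x *\<^sub>R w)) (at t within {0..h})"
      by (auto intro!: derivative_eq_intros)
    from has_derivative_compose[OF this du[OF q]] show ?thesis
      unfolding \<psi>_def using has_derivative_linear[OF du[OF q]] by (simp add: linear_scale)
  qed
  obtain t where t: "t \<in> {0<..<h}" and \<psi>_eq: "\<psi> h - \<psi> 0 = hu (p + s *\<^sub>R u + t *\<^sub>R w) w * h"
    using mvt_simple[OF h, of \<psi>, OF d\<psi>] by auto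
  have "second_difference g p u w h = \<phi> h - \<phi> 0"
    unfolding \<phi>_def second_difference_def by simp
  also have "\<dots> = h * (\<psi> h - \<psi> 0)"
    using \<phi>_eq unfolding \<psi>_def by simp
  also have "\<dots> = h * h * hu (p + s *\<^sub>R u + t *\<^sub>R w) w"
    using \<psi>_eq by simp
  finally show ?thesis using s t by blast
qed

lemma second_difference_quotient_near:
  fixes g :: "'a::real_normed_vector \<Rightarrow> real"
  assumes U: "open U" and p: "p \<in> U"
    and dg: "\<And>q. q \<in> U \<Longrightarrow> (g has_derivative g' q) (at q)"
    and du: "\<And>q. q \<in> U \<Longrightarrow> ((\<lambda>q. g' q u) has_derivative hu q) (at q)"
    and cont: "isCont (\<lambda>q. hu q w) p" and \<epsilon>: "0 < \<epsilon>"
  shows "\<exists>\<delta>>0. \<forall>h. 0 < h \<longrightarrow> h < \<delta> \<longrightarrow>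
           \<bar>second_difference g p u w h / (h * h) - hu p w\<bar> < \<epsilon>"
proof -
  obtain r1 where "r1 > 0" and r1: "\<And>q. dist q p < r1 \<Longrightarrow> \<bar>hu q w - hu p w\<bar> < \<epsilon>"
    using cont \<epsilon> unfolding continuous_at_eps_delta dist_real_def by blast
  obtain r2 where "r2 > 0" and r2: "ball p r2 \<subseteq> U"
    using U p open_contains_ball by blast
  have norms: "norm u + norm w + 1 > 0"
    by (smt (verit) norm_ge_zero)
  define \<delta> where "\<delta> = min r1 r2 / (norm u + norm w + 1)"
  have "\<delta> > 0"
    unfolding \<delta>_def using \<open>r1 > 0\<close> \<open>r2 > 0\<close> norms by simp
  moreover have "\<bar>second_difference g p u w h / (h * h) - hu p w\<bar> < \<epsilon>" if "0 < h" "h < \<delta>" for h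
  proof -
    have near: "dist (p + s *\<^sub>R u + t *\<^sub>R w) p < min r1 r2" if "s \<in> {0..h}" "t \<in> {0..h}" for s t
    proof -
      have "dist (p + s *\<^sub>R u + t *\<^sub>R w) p \<le> s * norm u + t * norm w"
        using norm_triangle_ineq[of "s *\<^sub>R u" "t *\<^sub>R w"] that by (simp add: dist_norm)
      also have "\<dots> \<le> h * (norm u + norm w)"
        using that by (simp add: distrib_left add_mono mult_right_mono)
      also have "\<dots> < \<delta> * (norm u + norm w + 1)"
        using \<open>0 < h\<close> \<open>h < \<delta>\<close> by (smt (verit) mult_strict_mono norm_ge_zero)
      also have "\<dots> = min r1 r2"
        unfolding \<delta>_def using norms by simp
      finally show ?thesis .
    qed
    have "p + s *\<^sub>R u + t *\<^sub>R w \<in> U" if "s \<in> {0..h}" "t \<in> {0..h}" for s t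
      using near[OF that] r2 by (auto simp: dist_commute)
    then obtain s t where st: "s \<in> {0<..<h}" "t \<in> {0<..<h}"
      and eq: "second_difference g p u w h = h * h * hu (p + s *\<^sub>R u + t *\<^sub>R w) w"
      using second_difference_mvt[OF \<open>0 < h\<close> _ dg du] by metis
    have "second_difference g p u w h / (h * h) = hu (p + s *\<^sub>R u + t *\<^sub>R w) w"
      using eq \<open>0 < h\<close> by simp
    then show ?thesis
      using r1 near st by auto
  qed
  ultimately show ?thesis by blast
qed

lemma has_derivative_second_symmetric_real:
  fixes g :: "'a::real_normed_vector \<Rightarrow> real"
  assumes U: "open U" and p: "p \<in> U"
    and dg: "\<And>q. q \<in> U \<Longrightarrow> (g has_derivative g' q) (at q)"
    and du: "\<And>q. q \<in> U \<Longrightarrow> ((\<lambda>q. g' q u) has_derivative hu q) (at q)"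
    and dw: "\<And>q. q \<in> U \<Longrightarrow> ((\<lambda>q. g' q w) has_derivative hw q) (at q)"
    and cu: "isCont (\<lambda>q. hu q w) p" and cw: "isCont (\<lambda>q. hw q u) p"
  shows "hu p w = hw p u"
proof (rule ccontr)
  define \<epsilon> where "\<epsilon> = \<bar>hu p w - hw p u\<bar> / 2"
  assume "hu p w \<noteq> hw p u"
  then have "\<epsilon> > 0" unfolding \<epsilon>_def by simp
  obtain \<delta>1 where "\<delta>1 > 0"
    and \<delta>1: "\<And>h. 0 < h \<Longrightarrow> h < \<delta>1 \<Longrightarrow> \<bar>second_difference g p u w h / (h * h) - hu p w\<bar> < \<epsilon>"
    using second_difference_quotient_near[OF U p dg du cu \<open>\<epsilon> > 0\<close>] by blast
  obtain \<delta>2 where "\<delta>2 > 0"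
    and \<delta>2: "\<And>h. 0 < h \<Longrightarrow> h < \<delta>2 \<Longrightarrow> \<bar>second_difference g p u w h / (h * h) - hw p u\<bar> < \<epsilon>"
    using second_difference_quotient_near[OF U p dg dw cw \<open>\<epsilon> > 0\<close>]
    by (auto simp: second_difference_commute)
  define h where "h = min \<delta>1 \<delta>2 / 2"
  have "0 < h" "h < \<delta>1" "h < \<delta>2"
    unfolding h_def using \<open>\<delta>1 > 0\<close> \<open>\<delta>2 > 0\<close> by auto
  define Q where "Q = second_difference g p u w h / (h * h)"
  have "\<bar>Q - hu p w\<bar> < \<epsilon>" "\<bar>Q - hw p u\<bar> < \<epsilon>"
    unfolding Q_def using \<delta>1 \<delta>2 \<open>0 < h\<close> \<open>h < \<delta>1\<close> \<open>h < \<delta>2\<close> by auto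
  then have "\<bar>hu p w - hw p u\<bar> < \<epsilon> + \<epsilon>"
    by (smt (verit) abs_triangle_ineq4)
  then show False
    unfolding \<epsilon>_def by simp
qed

lemma has_derivative_second_symmetric:
  fixes g :: "'a::real_normed_vector \<Rightarrow> 'b::real_inner"
  assumes U: "open U" and p: "p \<in> U"
    and dg: "\<And>q. q \<in> U \<Longrightarrow> (g has_derivative g' q) (at q)"
    and du: "\<And>q. q \<in> U \<Longrightarrow> ((\<lambda>q. g' q u) has_derivative hu q) (at q)"
    and dw: "\<And>q. q \<in> U \<Longrightarrow> ((\<lambda>q. g' q w) has_derivative hw q) (at q)"
    and cu: "isCont (\<lambda>q. hu q w) p" and cw: "isCont (\<lambda>q. hw q u) p"
  shows "hu p w = hw p u"
proof -
  define c where "c = hu p w - hw p u"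
  have "hu p w \<bullet> c = hw p u \<bullet> c"
  proof (rule has_derivative_second_symmetric_real[OF U p])
    show "((\<lambda>q. g q \<bullet> c) has_derivative (\<lambda>v. g' q v \<bullet> c)) (at q)" if "q \<in> U" for q
      using dg[OF that] by (rule bounded_linear.has_derivative[OF bounded_linear_inner_left])
    show "((\<lambda>q. g' q u \<bullet> c) has_derivative (\<lambda>v. hu q v \<bullet> c)) (at q)" if "q \<in> U" for q
      using du[OF that] by (rule bounded_linear.has_derivative[OF bounded_linear_inner_left])
    show "((\<lambda>q. g' q w \<bullet> c) has_derivative (\<lambda>v. hw q v \<bullet> c)) (at q)" if "q \<in> U" for q
      using dw[OF that] by (rule bounded_linear.has_derivative[OF bounded_linear_inner_left])
    show "isCont (\<lambda>q. hu q w \<bullet> c) p" "isCont (\<lambda>q. hw q u \<bullet> c) p"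
      using cu cw by (auto intro: continuous_intros)
  qed
  then have "c \<bullet> c = 0"
    unfolding c_def by (simp add: inner_diff_left)
  then show ?thesis unfolding c_def by simp
qed

lemma Ck_on_const:
  assumes U: "open U" and F: "\<And>q. q \<in> U \<Longrightarrow> F q = c"
  shows "Ck_on k U F"
  using F
proof (induction k arbitrary: F c)
  case 0
  then show ?case
    using continuous_on_eq[OF continuous_on_const[of U c]] by simp
next
  case (Suc k)
  have dF: "(F has_derivative (\<lambda>v. 0)) (at q)" if "q \<in> U" for q
    by (rule has_derivative_transform_within_open[OF has_derivative_const U that])
      (simp add: Suc.prems)
  then have "F differentiable_on U"
    using U differentiable_on_eq_differentiable_at differentiable_def by blast
  moreover have "Ck_on k U (\<lambda>p. frechet_derivative F (at p) v)" for v
    by (rule Suc.IH[where c = 0]) (simp add: frechet_derivative_at[OF dF, symmetric])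
  ultimately show ?case by simp
qed

lemma smooth_on_const:
  assumes "open U" "\<And>q. q \<in> U \<Longrightarrow> F q = c"
  shows "smooth_on U F"
  unfolding smooth_on_def using Ck_on_const[of U F c] assms by blast

lemma differentiable_on_has_frechet_derivative:
  assumes "F differentiable_on U" "open U" "q \<in> U"
  shows "(F has_derivative frechet_derivative F (at q)) (at q)"
  using assms differentiable_on_eq_differentiable_at frechet_derivative_works by blast

lemma Ck2_onD:
  assumes F: "Ck_on (Suc (Suc 0)) U F" and U: "open U" and q: "q \<in> U"
  shows "(F has_derivative frechet_derivative F (at q)) (at q)"
    and "((\<lambda>p. frechet_derivative F (at p) v) has_derivative
           frechet_derivative (\<lambda>p. frechet_derivative F (at p) v) (at q)) (at q)"
    and "continuous_on U (\<lambda>p. frechet_derivative (\<lambda>p. frechet_derivative F (at p) v) (at p) w)"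
  using F differentiable_on_has_frechet_derivative[OF _ U q] by auto

lemma frechet_derivative_second_symmetric:
  fixes Z :: "real^2 \<Rightarrow> 'b::real_inner"
  assumes Z: "Ck_on (Suc (Suc 0)) U Z" and U: "open U" and p: "p \<in> U"
  shows "frechet_derivative (\<lambda>q. frechet_derivative Z (at q) u) (at p) w
       = frechet_derivative (\<lambda>q. frechet_derivative Z (at q) w) (at p) u"
proof (rule has_derivative_second_symmetric[OF U p])
  show "(Z has_derivative frechet_derivative Z (at q)) (at q)"
    "((\<lambda>q. frechet_derivative Z (at q) u) has_derivative
        frechet_derivative (\<lambda>q. frechet_derivative Z (at q) u) (at q)) (at q)"
    "((\<lambda>q. frechet_derivative Z (at q) w) has_derivative
        frechet_derivative (\<lambda>q. frechet_derivative Z (at q) w) (at q)) (at q)"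
    if "q \<in> U" for q
    using Ck2_onD[OF Z U that] by blast+
  show "isCont (\<lambda>q. frechet_derivative (\<lambda>q. frechet_derivative Z (at q) u) (at q) w) p"
    "isCont (\<lambda>q. frechet_derivative (\<lambda>q. frechet_derivative Z (at q) w) (at q) u) p"
    using Ck2_onD(3)[OF Z U] U p continuous_on_eq_continuous_at by blast+
qed

section \<open>Constant Christoffel symbols\<close>

definition christoffel :: "(2 \<Rightarrow> 2 \<Rightarrow> 2 \<Rightarrow> real) \<Rightarrow> real^2 \<Rightarrow> real^2 \<Rightarrow> real^2" where
  "christoffel G u v = (\<chi> k. \<Sum>i\<in>UNIV. \<Sum>j\<in>UNIV. u$i * v$j * G i j k)"

lemma nabla_eq:
  "nabla G Y Z = (\<lambda>p. frechet_derivative Z (at p) (Y p) + christoffel G (Y p) (Z p))"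
  by (simp add: fun_eq_iff nabla_def dirderiv_def christoffel_def)

lemma lie_eq:
  "lie X Y = (\<lambda>p. frechet_derivative Y (at p) (X p) - frechet_derivative X (at p) (Y p))"
  by (simp add: fun_eq_iff lie_def dirderiv_def)

lemma bounded_bilinear_christoffel: "bounded_bilinear (christoffel G)"
proof -
  have "bilinear (christoffel G)"
    unfolding bilinear_def
    by (auto intro!: linearI simp: christoffel_def vec_eq_iff sum_2 algebra_simps)
  then show ?thesis
    using bilinear_conv_bounded_bilinear by blast
qed

lemma christoffel_minus [simp]:
  "christoffel G (- u) v = - christoffel G u v"
  "christoffel G u (- v) = - christoffel G u v"
  using bounded_bilinear.minus_left[OF bounded_bilinear_christoffel]
    bounded_bilinear.minus_right[OF bounded_bilinear_christoffel] by blast+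

definition ricci_matrix :: "(2 \<Rightarrow> 2 \<Rightarrow> 2 \<Rightarrow> real) \<Rightarrow> real^2^2" where
  "ricci_matrix G = (\<chi> j k. \<Sum>i\<in>UNIV. \<Sum>l\<in>UNIV. G j k l * G i l i - G i k l * G j l i)"

lemma ricci_matrix_eq: "(\<chi> j k. ricci G p j k) = ricci_matrix G"
  by (simp add: vec_eq_iff forall_2 ricci_def curv_def coord_def nabla_eq lie_eq ricci_matrix_def
      christoffel_def sum_2 axis_def algebra_simps)

section \<open>The Killing equation in coordinates\<close>

text \<open>Row \<open>j\<close> is \<open>\<partial>\<^sub>j X\<close>, so this is the transpose of the library's \<open>jacobian\<close>.\<close>

definition partials :: "vf \<Rightarrow> real^2 \<Rightarrow> real^2^2" where
  "partials X q = (\<chi> j. frechet_derivative X (at q) (axis j 1))"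

definition killing_op :: "(2 \<Rightarrow> 2 \<Rightarrow> 2 \<Rightarrow> real) \<Rightarrow> 2 \<Rightarrow> real^2^2 \<Rightarrow> real^2^2" where
  "killing_op G i \<mu> = (\<chi> j. christoffel G (axis i 1) (axis j 1) v* \<mu>
      - christoffel G (axis i 1) (\<mu> $ j) - christoffel G (\<mu> $ i) (axis j 1))"

lemma bounded_linear_killing_op: "bounded_linear (killing_op G i)"
proof -
  have "linear (killing_op G i)"
    by (rule linearI)
      (simp_all add: killing_op_def christoffel_def vector_matrix_mult_def vec_eq_iff sum_2
        algebra_simps)
  then show ?thesis
    using linear_conv_bounded_linear by blast
qed

lemma frechet_derivative_eq_partials:
  assumes "linear (frechet_derivative X (at p))"
  shows "frechet_derivative X (at p) v = v v* partials X p"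
  by (subst linear_eq_sum_axis[OF assms])
    (simp add: vec_eq_iff vector_matrix_mult_def partials_def)

lemma affine_killing_Ck2: "affine_killing G U X \<Longrightarrow> Ck_on (Suc (Suc 0)) U X"
  unfolding affine_killing_def smooth_on_def by blast

lemma affine_killingD:
  assumes "affine_killing G U X" "smooth_on U Y" "smooth_on U Z" "p \<in> U"
  shows "lie X (nabla G Y Z) p - nabla G Y (lie X Z) p - nabla G (lie X Y) Z p = 0"
  using assms unfolding affine_killing_def by simp

lemma killing_second_derivative:
  assumes X: "affine_killing G U X" and U: "open U" and p: "p \<in> U"
  shows "frechet_derivative (\<lambda>q. frechet_derivative X (at q) (axis j 1)) (at p) (axis i 1)
       = killing_op G i (partials X p) $ j"
proof -
  let ?D = "\<lambda>i q. frechet_derivative X (at q) (axis i 1)"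
  have dX: "(X has_derivative frechet_derivative X (at p)) (at p)"
    and dD: "(?D j has_derivative frechet_derivative (?D j) (at p)) (at p)"
    by (rule Ck2_onD[OF affine_killing_Ck2[OF X] U p])+
  have coord: "smooth_on U (coord k)" for k
    unfolding coord_def by (rule smooth_on_const[OF U]) (rule refl)
  have "lie X (nabla G (coord i) (coord j)) p - nabla G (coord i) (lie X (coord j)) p
      - nabla G (lie X (coord i)) (coord j) p = 0"
    by (rule affine_killingD[OF X coord coord p])
  moreover have "lie X (nabla G (coord i) (coord j)) p
      = - frechet_derivative X (at p) (christoffel G (axis i 1) (axis j 1))"
    by (simp add: nabla_eq lie_eq coord_def)
  moreover have "nabla G (coord i) (lie X (coord j)) p
      = - frechet_derivative (?D j) (at p) (axis i 1) - christoffel G (axis i 1) (?D j p)"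
    using frechet_derivative_at[OF has_derivative_minus[OF dD], symmetric]
    by (simp add: nabla_eq lie_eq coord_def)
  moreover have "nabla G (lie X (coord i)) (coord j) p = - christoffel G (?D i p) (axis j 1)"
    by (simp add: nabla_eq lie_eq coord_def)
  ultimately have "frechet_derivative (?D j) (at p) (axis i 1)
      = frechet_derivative X (at p) (christoffel G (axis i 1) (axis j 1))
        - christoffel G (axis i 1) (?D j p) - christoffel G (?D i p) (axis j 1)"
    by (simp add: algebra_simps)
  moreover have "frechet_derivative X (at p) (christoffel G (axis i 1) (axis j 1))
      = christoffel G (axis i 1) (axis j 1) v* partials X p"
    by (rule frechet_derivative_eq_partials[OF has_derivative_linear[OF dX]])
  moreover have "?D k p = partials X p $ k" for k
    by (simp add: partials_def)
  ultimately show ?thesis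
    by (simp add: killing_op_def)
qed

lemma partials_has_derivative:
  assumes X: "affine_killing G U X" and U: "open U" and q: "q \<in> U"
  shows "(partials X has_derivative (\<lambda>v. \<Sum>l\<in>UNIV. v$l *\<^sub>R killing_op G l (partials X q))) (at q)"
proof -
  let ?D = "\<lambda>q j. frechet_derivative X (at q) (axis j 1)"
  have dj: "((\<lambda>q. ?D q j) has_derivative
      (\<lambda>v. (\<Sum>l\<in>UNIV. v$l *\<^sub>R killing_op G l (partials X q)) $ j)) (at q)" for j
  proof -
    have d: "((\<lambda>q. ?D q j) has_derivative frechet_derivative (\<lambda>q. ?D q j) (at q)) (at q)"
      using Ck2_onD(2)[OF affine_killing_Ck2[OF X] U q] .
    have "frechet_derivative (\<lambda>q. ?D q j) (at q)
        = (\<lambda>v. (\<Sum>l\<in>UNIV. v$l *\<^sub>R killing_op G l (partials X q)) $ j)"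
      by (rule ext, subst linear_eq_sum_axis[OF has_derivative_linear[OF d]])
        (simp add: killing_second_derivative[OF X U q])
    with d show ?thesis
      by simp
  qed
  have "((\<lambda>q. \<chi> j. ?D q j) has_derivative
      (\<lambda>v. \<chi> j. (\<Sum>l\<in>UNIV. v$l *\<^sub>R killing_op G l (partials X q)) $ j)) (at q)"
    by (rule has_derivative_vec_lambda) (rule dj)
  moreover have "(\<lambda>q. \<chi> j. ?D q j) = partials X"
    by (simp add: partials_def fun_eq_iff)
  ultimately show ?thesis
    by (simp only: vec_lambda_eta)
qed

text \<open>Integrability of the system \<open>\<partial>\<^sub>i \<mu> = killing_op G i \<mu>\<close>.\<close>

definition killing_integrable :: "(2 \<Rightarrow> 2 \<Rightarrow> 2 \<Rightarrow> real) \<Rightarrow> real^2^2 \<Rightarrow> bool" where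
  "killing_integrable G \<nu> \<longleftrightarrow>
     (\<forall>i l. killing_op G i (killing_op G l \<nu>) = killing_op G l (killing_op G i \<nu>))"

lemma killing_integrable_partials:
  assumes X: "affine_killing G U X" and U: "open U" and p: "p \<in> U"
  shows "killing_integrable G (partials X p)"
  unfolding killing_integrable_def
proof (intro allI)
  fix i l
  let ?d = "\<lambda>q v. \<Sum>m\<in>UNIV. v$m *\<^sub>R killing_op G m (partials X q)"
  have d: "(partials X has_derivative ?d q) (at q)" if "q \<in> U" for q
    using partials_has_derivative[OF X U that] .
  have dr: "((\<lambda>q. ?d q (axis r 1)) has_derivative (\<lambda>v. killing_op G r (?d q v))) (at q)"
    if "q \<in> U" for r q
    using bounded_linear.has_derivative[OF bounded_linear_killing_op d[OF that]]
    by (simp add: sum_axis_scaleR)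
  have "isCont (partials X) p"
    using d[OF p] by (rule has_derivative_continuous)
  then have cont: "isCont (\<lambda>q. killing_op G r (?d q (axis s 1))) p" for r s
    unfolding sum_axis_scaleR
    by (rule isCont_o2)
      (intro linear_continuous_at bounded_linear_compose[OF bounded_linear_killing_op]
        bounded_linear_killing_op)
  have "killing_op G i (?d p (axis l 1)) = killing_op G l (?d p (axis i 1))"
    by (rule has_derivative_second_symmetric[OF U p d dr dr cont cont])
  then show "killing_op G i (killing_op G l (partials X p)) = killing_op G l (killing_op G i (partials X p))"
    by (simp add: sum_axis_scaleR)
qed

lemma killing_integrable_killing_op_partials:
  assumes X: "affine_killing G U X" and U: "open U" and p: "p \<in> U"
  shows "killing_integrable G (killing_op G r (partials X p))"
  unfolding killing_integrable_def
proof (intro allI)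
  fix i l
  define \<Phi> where "\<Phi> \<nu> = killing_op G i (killing_op G l \<nu>) - killing_op G l (killing_op G i \<nu>)" for \<nu>
  have "bounded_linear \<Phi>"
    unfolding \<Phi>_def
    by (intro bounded_linear_sub bounded_linear_compose[OF bounded_linear_killing_op]
        bounded_linear_killing_op)
  from bounded_linear.has_derivative[OF this partials_has_derivative[OF X U p]]
  have d: "((\<lambda>q. \<Phi> (partials X q)) has_derivative
      (\<lambda>v. \<Phi> (\<Sum>m\<in>UNIV. v$m *\<^sub>R killing_op G m (partials X p)))) (at p)" .
  have "((\<lambda>q. \<Phi> (partials X q)) has_derivative (\<lambda>v. 0)) (at p)"
  proof (rule has_derivative_transform_within_open[OF has_derivative_const U p])
    show "0 = \<Phi> (partials X q)" if "q \<in> U" for q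
      using killing_integrable_partials[OF X U that] by (simp add: \<Phi>_def killing_integrable_def)
  qed
  from has_derivative_unique[OF d this]
  have "\<Phi> (\<Sum>m\<in>UNIV. axis r 1 $ m *\<^sub>R killing_op G m (partials X p)) = 0"
    by (rule fun_cong)
  then show "killing_op G i (killing_op G l (killing_op G r (partials X p)))
      = killing_op G l (killing_op G i (killing_op G r (partials X p)))"
    by (simp add: \<Phi>_def sum_axis_scaleR)
qed

section \<open>The algebraic obstruction for Type A\<close>

definition ricci_skew :: "(2 \<Rightarrow> 2 \<Rightarrow> 2 \<Rightarrow> real) \<Rightarrow> real^2^2 \<Rightarrow> bool" where
  "ricci_skew G \<nu> \<longleftrightarrow> \<nu> ** transpose (ricci_matrix G) = - (ricci_matrix G ** transpose \<nu>)"

text \<open>The solution of \<open>A \<nu>\<^sup>T = det A \<cdot> J\<close> with \<open>J = [[0, 1], [-1, 0]]\<close>.\<close>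

definition skew_solution :: "real^2^2 \<Rightarrow> real^2^2" where
  "skew_solution A = vector [vector [A$1$2, - A$1$1], vector [A$2$2, - A$2$1]]"

lemma skew_product_scaled:
  fixes A \<nu> :: "real^2^2"
  assumes "\<nu> ** transpose A = - (A ** transpose \<nu>)"
  shows "det A *\<^sub>R \<nu> = (A ** transpose \<nu>) $ 1 $ 2 *\<^sub>R skew_solution A"
  using assms
  by (simp add: vec_eq_iff forall_2 matrix_matrix_mult_def transpose_def sum_2 skew_solution_def det_2)
    algebra

lemma ricci_skew_scaleR: "ricci_skew G \<nu> \<Longrightarrow> ricci_skew G (c *\<^sub>R \<nu>)"
  by (simp add: ricci_skew_def transpose_scalar matrix_scalar_ac flip: scalar_matrix_assoc)

lemmas typeA_expand = killing_integrable_def ricci_skew_def killing_op_def christoffel_def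
  ricci_matrix_def typeA_def vector_matrix_mult_def matrix_matrix_mult_def transpose_def
  sum_2 forall_2 vec_eq_iff axis_def

lemma typeA_killing_integrable_imp_ricci_skew:
  "killing_integrable (typeA a b c d e f) \<nu> \<Longrightarrow> ricci_skew (typeA a b c d e f) \<nu>"
  by (simp add: typeA_expand) (elim conjE, intro conjI; algebra)

lemma typeA_ricci_skew_killing_op_skew_solution:
  fixes a b c d e f :: real
  defines "G \<equiv> typeA a b c d e f"
  assumes "\<And>r. ricci_skew G (killing_op G r (skew_solution (ricci_matrix G)))"
  shows "det (ricci_matrix G) = 0"
  using assms(2)[of 1] assms(2)[of 2] unfolding G_def
  by (simp add: typeA_expand skew_solution_def det_2) algebra

lemma typeA_killing_integrable_eq_0:
  fixes a b c d e f :: real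
  defines "G \<equiv> typeA a b c d e f"
  assumes det: "det (ricci_matrix G) \<noteq> 0"
    and int: "killing_integrable G \<nu>" "\<And>r. killing_integrable G (killing_op G r \<nu>)"
  shows "\<nu> = 0"
proof -
  define s where "s = (ricci_matrix G ** transpose \<nu>) $ 1 $ 2"
  have scaled: "det (ricci_matrix G) *\<^sub>R \<nu> = s *\<^sub>R skew_solution (ricci_matrix G)"
    unfolding s_def using int(1) typeA_killing_integrable_imp_ricci_skew
    by (simp add: G_def ricci_skew_def skew_product_scaled)
  show "\<nu> = 0"
  proof (rule ccontr)
    assume "\<nu> \<noteq> 0"
    with det scaled have "s \<noteq> 0" by auto
    have "(det (ricci_matrix G) / s) *\<^sub>R \<nu> = (1 / s) *\<^sub>R (s *\<^sub>R skew_solution (ricci_matrix G))"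
      by (simp flip: scaled)
    with \<open>s \<noteq> 0\<close> have "skew_solution (ricci_matrix G) = (det (ricci_matrix G) / s) *\<^sub>R \<nu>"
      by simp
    then have "ricci_skew G (killing_op G r (skew_solution (ricci_matrix G)))" for r
      using typeA_killing_integrable_imp_ricci_skew[OF int(2)[unfolded G_def]]
      by (simp add: G_def linear_scale[OF bounded_linear.linear[OF bounded_linear_killing_op]]
          ricci_skew_scaleR)
    with det show False
      using typeA_ricci_skew_killing_op_skew_solution unfolding G_def by blast
  qed
qed

lemma typeA_affine_killing_has_derivative_0:
  assumes "ricci_nondegenerate (typeA a b c d e f)"
    and X: "affine_killing (typeA a b c d e f) U X" and U: "open U" and p: "p \<in> U"
  shows "(X has_derivative (\<lambda>v. 0)) (at p)"
proof -
  have det: "det (ricci_matrix (typeA a b c d e f)) \<noteq> 0"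
    using assms(1) by (simp add: ricci_nondegenerate_def ricci_matrix_eq)
  have dX: "(X has_derivative frechet_derivative X (at p)) (at p)"
    using Ck2_onD(1)[OF affine_killing_Ck2[OF X] U p] .
  have "partials X p = 0"
    using typeA_killing_integrable_eq_0[OF det killing_integrable_partials[OF X U p]
        killing_integrable_killing_op_partials[OF X U p]] .
  then have "frechet_derivative X (at p) = (\<lambda>v. 0)"
    by (simp add: fun_eq_iff frechet_derivative_eq_partials[OF has_derivative_linear[OF dX]])
  with dX show ?thesis
    by simp
qed

section \<open>Constant fields are affine Killing\<close>

lemma has_derivative_apply_field:
  assumes Z: "Ck_on (Suc (Suc 0)) U Z" and Y: "Y differentiable_on U"
    and U: "open U" and p: "p \<in> U"
  shows "((\<lambda>q. frechet_derivative Z (at q) (Y q)) has_derivative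
      (\<lambda>v. frechet_derivative (\<lambda>q. frechet_derivative Z (at q) (Y p)) (at p) v
         + frechet_derivative Z (at p) (frechet_derivative Y (at p) v))) (at p)"
proof -
  let ?DZ = "\<lambda>i q. frechet_derivative Z (at q) (axis i 1)"
  have expand: "frechet_derivative Z (at q) w = (\<Sum>i\<in>UNIV. w$i *\<^sub>R ?DZ i q)" if "q \<in> U" for q w
    using linear_eq_sum_axis[OF has_derivative_linear[OF Ck2_onD(1)[OF Z U that]]] .
  have dY: "(Y has_derivative frechet_derivative Y (at p)) (at p)"
    using differentiable_on_has_frechet_derivative[OF Y U p] .
  have dDZ: "(?DZ i has_derivative frechet_derivative (?DZ i) (at p)) (at p)" for i
    using Ck2_onD(2)[OF Z U p] .
  have "((\<lambda>q. frechet_derivative Z (at q) (Y p)) has_derivative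
      (\<lambda>v. \<Sum>i\<in>UNIV. Y p $ i *\<^sub>R frechet_derivative (?DZ i) (at p) v)) (at p)"
  proof (rule has_derivative_transform_within_open[OF _ U p])
    show "((\<lambda>q. \<Sum>i\<in>UNIV. Y p $ i *\<^sub>R ?DZ i q) has_derivative
        (\<lambda>v. \<Sum>i\<in>UNIV. Y p $ i *\<^sub>R frechet_derivative (?DZ i) (at p) v)) (at p)"
      by (intro has_derivative_sum has_derivative_scaleR_right dDZ)
  qed (rule expand[symmetric])
  then have second: "frechet_derivative (\<lambda>q. frechet_derivative Z (at q) (Y p)) (at p) v
      = (\<Sum>i\<in>UNIV. Y p $ i *\<^sub>R frechet_derivative (?DZ i) (at p) v)" for v
    by (simp add: frechet_derivative_at[symmetric])
  have "((\<lambda>q. frechet_derivative Z (at q) (Y q)) has_derivative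
      (\<lambda>v. \<Sum>i\<in>UNIV. Y p $ i *\<^sub>R frechet_derivative (?DZ i) (at p) v
         + frechet_derivative Y (at p) v $ i *\<^sub>R ?DZ i p)) (at p)"
  proof (rule has_derivative_transform_within_open[OF _ U p])
    show "((\<lambda>q. \<Sum>i\<in>UNIV. Y q $ i *\<^sub>R ?DZ i q) has_derivative
        (\<lambda>v. \<Sum>i\<in>UNIV. Y p $ i *\<^sub>R frechet_derivative (?DZ i) (at p) v
           + frechet_derivative Y (at p) v $ i *\<^sub>R ?DZ i p)) (at p)"
      by (intro has_derivative_sum has_derivative_scaleR dDZ
          bounded_linear.has_derivative[OF bounded_linear_vec_nth dY])
  qed (rule expand[symmetric])
  moreover have "(\<Sum>i\<in>UNIV. frechet_derivative Y (at p) v $ i *\<^sub>R ?DZ i p)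
      = frechet_derivative Z (at p) (frechet_derivative Y (at p) v)" for v
    by (rule expand[OF p, symmetric])
  ultimately show ?thesis
    by (simp only: sum.distrib second)
qed

lemma constant_field_affine_killing:
  assumes U: "open U" and X: "\<And>p. p \<in> U \<Longrightarrow> X p = B"
  shows "affine_killing G U X"
  unfolding affine_killing_def
proof (intro conjI allI impI ballI)
  show "smooth_on U X"
    using smooth_on_const[OF U X] .
  fix Y Z :: vf and p
  assume "smooth_on U Y" "smooth_on U Z" and p: "p \<in> U"
  then have Y: "Ck_on (Suc 0) U Y" and Z: "Ck_on (Suc (Suc 0)) U Z"
    unfolding smooth_on_def by blast+
  let ?D2 = "\<lambda>u w. frechet_derivative (\<lambda>q. frechet_derivative Z (at q) u) (at p) w"
  let ?DY = "frechet_derivative Y (at p)" and ?DZ = "frechet_derivative Z (at p)"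
  have lieX: "lie X W q = frechet_derivative W (at q) B" if "q \<in> U" for W q
    using frechet_derivative_cong_open[OF U that X] that X by (simp add: lie_eq)
  have dY: "(Y has_derivative ?DY) (at p)" and dZ: "(Z has_derivative ?DZ) (at p)"
    using Ck2_onD(1)[OF Z U p] Y differentiable_on_has_frechet_derivative[OF _ U p] by auto
  have "(nabla G Y Z has_derivative (\<lambda>v. ?D2 (Y p) v + ?DZ (?DY v)
      + (christoffel G (Y p) (?DZ v) + christoffel G (?DY v) (Z p)))) (at p)"
    unfolding nabla_eq
    using Y by (intro has_derivative_add has_derivative_apply_field[OF Z _ U p]
        bounded_bilinear.FDERIV[OF bounded_bilinear_christoffel dY dZ]) simp
  then have "lie X (nabla G Y Z) p = ?D2 (Y p) B + ?DZ (?DY B)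
      + (christoffel G (Y p) (?DZ B) + christoffel G (?DY B) (Z p))"
    by (simp add: lieX[OF p] frechet_derivative_at[symmetric])
  moreover have "nabla G Y (lie X Z) p = ?D2 B (Y p) + christoffel G (Y p) (?DZ B)"
    using frechet_derivative_cong_open[OF U p lieX] lieX[OF p] by (simp add: nabla_eq)
  moreover have "nabla G (lie X Y) Z p = ?DZ (?DY B) + christoffel G (?DY B) (Z p)"
    by (simp add: nabla_eq lieX[OF p])
  moreover have "?D2 (Y p) B = ?D2 B (Y p)"
    by (rule frechet_derivative_second_symmetric[OF Z U p])
  ultimately show "lie X (nabla G Y Z) p - nabla G Y (lie X Z) p - nabla G (lie X Y) Z p = 0"
    by simp
qed

theorem mainTheorem14:
  fixes a b c d e f :: real and U :: "(real^2) set" and X :: "real^2 \<Rightarrow> real^2"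
  assumes "ricci_nondegenerate (typeA a b c d e f)"
    and "open U" and "connected U"
  shows "affine_killing (typeA a b c d e f) U X \<longleftrightarrow> (\<exists>B::real^2. \<forall>p\<in>U. X p = B)"
proof
  assume "affine_killing (typeA a b c d e f) U X"
  then have "X p = X q" if "p \<in> U" "q \<in> U" for p q
    using has_derivative_zero_unique_connected[OF assms(2,3)] that
      typeA_affine_killing_has_derivative_0[OF assms(1) _ assms(2)] by blast
  then show "\<exists>B. \<forall>p\<in>U. X p = B"
    by blast
next
  assume "\<exists>B. \<forall>p\<in>U. X p = B"
  then obtain B where "\<And>p. p \<in> U \<Longrightarrow> X p = B"
    by blast
  then show "affine_killing (typeA a b c d e f) U X"
    by (rule constant_field_affine_killing[OF assms(2)])
qed

end
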